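(* Let $0<\nu<1$ and let $R,S,T,U>0$ satisfy \[ T=-\tfrac{1}{3}(\nu+1)R+\frac{R^2}{R+S}+\tfrac12,\qquad U=\tfrac16\Big(2S\big(\nu-\tfrac{3R}{R+S}+1\big)+3\Big). \] For $\theta\in\mathbb{R}$ let \[ A(\theta)=\begin{pmatrix} 1-\nu\big(1+(1-\nu)(U-T)\big)(1-e^{-I\theta}) & \nu(1-\nu)(Ue^{-I\theta}-T)(1-e^{-I\theta})\\ \nu(1-\nu)(R+S) & (1-\nu)(1-\nu R)+\nu\big(1-(1-\nu)S\big)e^{-I\theta} \end{pmatrix}, \] where $I$ is the imaginary unit, and let $\lambda_1(\theta)$ be the eigenvalue of $A(\theta)$ depending analytically on $\theta$ near $0$ with $\lambda_1(0)=1$. Then \[ \lambda_1(\theta)-e^{-I\nu\theta}=\frac{1}{72}(\nu-1)\nu\Big((\nu-2)(\nu+1)+\frac{18}{R+S}\Big)\theta^4+O(\theta^5)\quad(\theta\to0). \]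
   Context: $A(\theta)$ is the amplification matrix, acting on Fourier amplitudes $(\hat Q,\hat q)$ of cell averages and interface point values, of the following parameterized Active Flux scheme for $q_t+aq_x=0$, $a>0$, on a uniform grid with cells $[x_{i-1/2},x_{i+1/2}]$ of width $\Delta x$ and Courant number $\nu=a\Delta t/\Delta x$: $q^{n+1}_{i+1/2}=(1-\nu)q^n_{i+1/2}+\nu q^n_{i-1/2}-\nu(1-\nu)\big(R(q^n_{i+1/2}-Q^n_i)-S(Q^n_i-q^n_{i-1/2})\big)$, $\bar q_{i+1/2}=Q^n_i+(1-\nu)\big(T(q^n_{i+1/2}-Q^n_i)+U(Q^n_i-q^n_{i-1/2})\big)$, $Q^{n+1}_i=Q^n_i-\nu(\bar q_{i+1/2}-\bar q_{i-1/2})$. The exact amplification factor is $e^{-I\nu\theta}$. At $\theta=0$ the two eigenvalues of $A$ are $1$ and $1-\nu(1-\nu)(R+S)\neq1$, so $\lambda_1$ is well defined near $\theta=0$. *)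

theory Defs
  imports "HOL-Analysis.Analysis" "HOL-Library.Landau_Symbols"
begin

definition AF_matrix :: "real \<Rightarrow> real \<Rightarrow> real \<Rightarrow> real \<Rightarrow> real \<Rightarrow> complex \<Rightarrow> complex^2^2" where
  "AF_matrix \<nu> R S T U \<theta> =
    (let z = exp (- \<i> * \<theta>); n = complex_of_real \<nu> in
     vector [vector [1 - n * (1 + (1 - n) * (of_real U - of_real T)) * (1 - z),
                     n * (1 - n) * (of_real U * z - of_real T) * (1 - z)],
             vector [n * (1 - n) * (of_real R + of_real S),
                     (1 - n) * (1 - n * of_real R) + n * (1 - (1 - n) * of_real S) * z]])"

definition is_eigenvalue :: "complex^'n^'n \<Rightarrow> complex \<Rightarrow> bool" where
  "is_eigenvalue M k \<longleftrightarrow> (\<exists>v. v \<noteq> 0 \<and> M *v v = k *s v)"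

end

theory Submission
  imports Defs
begin

(* The symbol A(theta) is a polynomial in z = exp(-I theta), and lambda_1(theta) is a root of its
   characteristic polynomial p(k) = k^2 - tr A(theta) k + det A(theta). Put
   mu(theta) = exp(-I nu theta) + c theta^4. Replacing exp(-I theta) and exp(-I nu theta) by their
   Taylor polynomials of degree 4 changes p(mu(theta)) only by O(theta^5), and after this replacement
   the coefficients of theta^0, ..., theta^4 vanish identically because of the choice of T, U and c;
   hence p(mu(theta)) = O(theta^5). Finally p(lambda_1) - p(mu) = (lambda_1 - mu)(lambda_1 + mu - tr A),
   and the second factor tends to 2 - tr A(0) = nu (1 - nu) (R + S) <> 0, so lambda_1 - mu = O(theta^5). *)

definition char_poly :: "'a::comm_ring_1^'n^'n \<Rightarrow> 'a \<Rightarrow> 'a" where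
  "char_poly M k = det (mat k - M)"

lemma char_poly_2x2: "char_poly (M :: 'a::comm_ring_1^2^2) k = k^2 - trace M * k + det M"
  by (simp add: char_poly_def det_2 trace_def sum_2 mat_def power2_eq_square algebra_simps)

lemma char_poly_eq_0_if_eigenvector:
  fixes M :: "'a::field^'n^'n"
  assumes "v \<noteq> 0" and "M *v v = k *s v"
  shows "char_poly M k = 0"
proof (rule ccontr)
  assume "char_poly M k \<noteq> 0"
  then obtain B where B: "B ** (mat k - M) = mat 1"
    unfolding char_poly_def invertible_det_nz[symmetric] invertible_def by blast
  have "mat k *v v = k *s v"
    by (simp add: vec_eq_iff matrix_vector_mult_def mat_def if_distrib if_distribR cong del: if_weak_cong)
  then have "(mat k - M) *v v = 0"
    using assms(2) by (simp add: matrix_vector_mult_diff_rdistrib)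
  then have "v = 0"
    using B by (metis matrix_vector_mul_assoc matrix_vector_mul_lid matrix_vector_mult_0_right)
  with assms(1) show False ..
qed

lemma tendsto_imp_bigo_1: "(f \<longlongrightarrow> c) F \<Longrightarrow> f \<in> O[F](\<lambda>_. 1)"
  by (rule bigoI_tendsto[where c = c]) simp_all

lemma char_poly_2x2_root_perturbation:
  fixes M :: "'b \<Rightarrow> 'a::real_normed_field^2^2"
  assumes root: "\<forall>\<^sub>F x in F. char_poly (M x) (l x) = 0"
    and lim: "((\<lambda>x. l x + m x - trace (M x)) \<longlongrightarrow> L) F" and "L \<noteq> 0"
    and residual: "(\<lambda>x. char_poly (M x) (m x)) \<in> O[F](h)"
  shows "(\<lambda>x. l x - m x) \<in> O[F](h)"
proof -
  let ?D = "\<lambda>x. l x + m x - trace (M x)"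
  have eq: "\<forall>\<^sub>F x in F. - char_poly (M x) (m x) * inverse (?D x) = l x - m x"
    using root tendsto_imp_eventually_ne[OF lim \<open>L \<noteq> 0\<close>]
  proof eventually_elim
    case (elim x)
    have "char_poly (M x) (l x) - char_poly (M x) (m x) = (l x - m x) * ?D x"
      unfolding char_poly_2x2 by algebra
    with elim show ?case
      by (simp add: divide_simps)
  qed
  have "(\<lambda>x. - char_poly (M x) (m x) * inverse (?D x)) \<in> O[F](h)"
    using residual tendsto_imp_bigo_1[OF tendsto_inverse[OF lim \<open>L \<noteq> 0\<close>]]
    by (intro landau_o.big_1_mult) simp_all
  then show ?thesis
    using landau_o.big.in_cong[OF eq] by simp
qed

lemma char_poly_2x2_bigo_perturbation:
  fixes M M' :: "'b \<Rightarrow> 'a::real_normed_field^2^2"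
  assumes entries: "\<And>i j. (\<lambda>x. M x $ i $ j - M' x $ i $ j) \<in> O[F](h)"
    and arg: "(\<lambda>x. k x - k' x) \<in> O[F](h)"
    and bounded: "\<And>i j. (\<lambda>x. M x $ i $ j) \<in> O[F](\<lambda>_. 1)" "\<And>i j. (\<lambda>x. M' x $ i $ j) \<in> O[F](\<lambda>_. 1)"
      "k \<in> O[F](\<lambda>_. 1)" "k' \<in> O[F](\<lambda>_. 1)"
  shows "(\<lambda>x. char_poly (M x) (k x) - char_poly (M' x) (k' x)) \<in> O[F](h)"
proof -
  have diag: "(\<lambda>x. (M x $ i $ i - M' x $ i $ i) - (k x - k' x)) \<in> O[F](h)" for i
    using entries arg by (rule sum_in_bigo)
  have shifted: "(\<lambda>x. M x $ i $ i - k x) \<in> O[F](\<lambda>_. 1)" "(\<lambda>x. M' x $ i $ i - k' x) \<in> O[F](\<lambda>_. 1)" for i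
    using bounded by (auto intro: sum_in_bigo)
  have "char_poly (M x) (k x) - char_poly (M' x) (k' x) =
      ((M x$1$1 - M' x$1$1) - (k x - k' x)) * (M x$2$2 - k x)
      + ((M x$2$2 - M' x$2$2) - (k x - k' x)) * (M' x$1$1 - k' x)
      - (M x$1$2 - M' x$1$2) * M x$2$1 - (M x$2$1 - M' x$2$1) * M' x$1$2" for x
    unfolding char_poly_2x2 det_2 trace_def sum_2 by algebra
  moreover note sum_in_bigo(2)[OF sum_in_bigo(2)[OF sum_in_bigo(1)
      [OF landau_o.big_1_mult[OF diag[of 1] shifted(1)[of 2]] landau_o.big_1_mult[OF diag[of 2] shifted(2)[of 1]]]
      landau_o.big_1_mult[OF entries[of 1 2] bounded(1)[of 2 1]]]
      landau_o.big_1_mult[OF entries[of 2 1] bounded(2)[of 1 2]]]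
  ultimately show ?thesis
    by simp
qed

lemma exp_taylor_remainder_bigo:
  fixes w :: "'b \<Rightarrow> 'a::{banach,real_normed_field}"
  assumes "(w \<longlongrightarrow> 0) F"
  shows "(\<lambda>x. exp (w x) - (\<Sum>k<n. w x ^ k / fact k)) \<in> O[F](\<lambda>x. w x ^ n)"
proof (cases n)
  case 0
  then show ?thesis
    using tendsto_imp_bigo_1[OF tendsto_exp[OF assms]] by simp
next
  case (Suc m)
  have "\<forall>\<^sub>F x in F. norm (w x) < 1"
    using tendsto_norm_zero[OF assms] by (rule order_tendstoD) simp
  then have "\<forall>\<^sub>F x in F. norm (exp (w x) - (\<Sum>k\<le>m. w x ^ k / fact k)) \<le> exp 1 / fact m * norm (w x ^ Suc m)"
  proof eventually_elim
    case (elim x)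
    have "norm (exp (w x) - (\<Sum>k\<le>m. w x ^ k / fact k)) \<le> exp (norm (w x)) * norm (w x) ^ Suc m / fact m"
      by (rule Taylor_exp_field)
    also have "\<dots> \<le> exp 1 * norm (w x) ^ Suc m / fact m"
      using elim by (intro divide_right_mono mult_right_mono) simp_all
    finally show ?case
      by (simp add: norm_mult norm_power)
  qed
  then show ?thesis
    unfolding Suc lessThan_Suc_atMost by (rule bigoI)
qed

definition AF_symbol :: "real \<Rightarrow> real \<Rightarrow> real \<Rightarrow> real \<Rightarrow> real \<Rightarrow> complex \<Rightarrow> complex^2^2" where
  "AF_symbol \<nu> R S T U z =
    (let n = complex_of_real \<nu> in
     vector [vector [1 - n * (1 + (1 - n) * (of_real U - of_real T)) * (1 - z),
                     n * (1 - n) * (of_real U * z - of_real T) * (1 - z)],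
             vector [n * (1 - n) * (of_real R + of_real S),
                     (1 - n) * (1 - n * of_real R) + n * (1 - (1 - n) * of_real S) * z]])"

lemma AF_matrix_eq_symbol: "AF_matrix \<nu> R S T U \<theta> = AF_symbol \<nu> R S T U (exp (- \<i> * \<theta>))"
  by (simp add: AF_matrix_def AF_symbol_def Let_def)

lemma AF_symbol_nth:
  "AF_symbol \<nu> R S T U z $ 1 $ 1 = 1 - \<nu> * (1 + (1 - \<nu>) * (U - T)) * (1 - z)"
  "AF_symbol \<nu> R S T U z $ 1 $ 2 = \<nu> * (1 - \<nu>) * (U * z - T) * (1 - z)"
  "AF_symbol \<nu> R S T U z $ 2 $ 1 = \<nu> * (1 - \<nu>) * (R + S)"
  "AF_symbol \<nu> R S T U z $ 2 $ 2 = (1 - \<nu>) * (1 - \<nu> * R) + \<nu> * (1 - (1 - \<nu>) * S) * z"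
  by (simp_all add: AF_symbol_def Let_def)

lemma tendsto_AF_symbol_nth:
  assumes "(z \<longlongrightarrow> a) F"
  shows "((\<lambda>x. AF_symbol \<nu> R S T U (z x) $ i $ j) \<longlongrightarrow> AF_symbol \<nu> R S T U a $ i $ j) F"
  using exhaust_2[of i] exhaust_2[of j]
  by (elim disjE; simp only: AF_symbol_nth; intro tendsto_intros assms)

lemma AF_symbol_nth_bigo_perturbation:
  assumes "(\<lambda>x. z x - z' x) \<in> O[F](h)" and "(z \<longlongrightarrow> a) F" and "(z' \<longlongrightarrow> a') F"
  shows "(\<lambda>x. AF_symbol \<nu> R S T U (z x) $ i $ j - AF_symbol \<nu> R S T U (z' x) $ i $ j) \<in> O[F](h)"
proof -
  define slope :: "complex \<Rightarrow> complex \<Rightarrow> complex" where "slope w w' =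
      (if i = 1 then if j = 1 then \<nu> * (1 + (1 - \<nu>) * (U - T)) else \<nu> * (1 - \<nu>) * (U + T - U * (w + w'))
       else if j = 1 then 0 else \<nu> * (1 - (1 - \<nu>) * S))" for w w' :: complex
  have "AF_symbol \<nu> R S T U w $ i $ j - AF_symbol \<nu> R S T U w' $ i $ j = (w - w') * slope w w'" for w w'
    using exhaust_2[of i] exhaust_2[of j] by (elim disjE) (simp_all add: AF_symbol_nth slope_def algebra_simps)
  moreover have "((\<lambda>x. slope (z x) (z' x)) \<longlongrightarrow> slope a a') F"
    unfolding slope_def using assms(2,3) by (auto intro!: tendsto_intros)
  ultimately show ?thesis
    using landau_o.big_1_mult[OF assms(1) tendsto_imp_bigo_1] by simp
qed

lemma AF_char_poly_bigo_perturbation: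
  assumes "(\<lambda>x. z x - z' x) \<in> O[F](h)" and "(\<lambda>x. k x - k' x) \<in> O[F](h)"
    and "(z \<longlongrightarrow> a) F" "(z' \<longlongrightarrow> a') F" "(k \<longlongrightarrow> b) F" "(k' \<longlongrightarrow> b') F"
  shows "(\<lambda>x. char_poly (AF_symbol \<nu> R S T U (z x)) (k x) - char_poly (AF_symbol \<nu> R S T U (z' x)) (k' x))
           \<in> O[F](h)"
  by (rule char_poly_2x2_bigo_perturbation[OF AF_symbol_nth_bigo_perturbation[OF assms(1,3,4)] assms(2)
      tendsto_imp_bigo_1[OF tendsto_AF_symbol_nth[OF assms(3)]] tendsto_imp_bigo_1[OF tendsto_AF_symbol_nth[OF assms(4)]]
      tendsto_imp_bigo_1[OF assms(5)] tendsto_imp_bigo_1[OF assms(6)]])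

lemma tendsto_AF_matrix_trace:
  "((\<lambda>\<theta>::real. trace (AF_matrix \<nu> R S T U \<theta>)) \<longlongrightarrow> 2 - of_real (\<nu> * (1 - \<nu>) * (R + S))) (at 0)"
proof -
  have "((\<lambda>\<theta>::real. trace (AF_matrix \<nu> R S T U \<theta>)) \<longlongrightarrow> trace (AF_symbol \<nu> R S T U 1)) (at 0)"
    unfolding AF_matrix_eq_symbol trace_def sum_2
    by (intro tendsto_add tendsto_AF_symbol_nth) (auto intro!: tendsto_eq_intros)
  moreover have "trace (AF_symbol \<nu> R S T U 1) = 2 - of_real (\<nu> * (1 - \<nu>) * (R + S))"
    by (simp add: trace_def sum_2 AF_symbol_nth algebra_simps)
  ultimately show ?thesis
    by simp
qed

(* The j-th hypothesis says that j! times the coefficient of y^j in the left-hand side of the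
   conclusion vanishes; Q in the proof is the quotient by y^5. *)
lemma monic_quadratic_at_exp_taylor:
  fixes t0 t1 d0 d1 d2 n c :: complex
  defines "Z \<equiv> \<lambda>y. \<Sum>k<5. y^k / fact k" and "G \<equiv> \<lambda>y. (\<Sum>k<5. (n * y)^k / fact k) + c * y^4"
  assumes low_coeffs: "1 + d0 + d1 + d2 - t0 - t1 = 0"
    "2*d2 + d1 - t1 + 2*n - n*t1 - n*t0 = 0"
    "4*d2 + d1 - t1 - 2*n*t1 + 4*n^2 - n^2*t1 - n^2*t0 = 0"
    "8*d2 + d1 - t1 - 3*n*t1 - 3*n^2*t1 + 8*n^3 - n^3*t1 - n^3*t0 = 0"
    "48*c + 16*d2 + d1 - t1 - 24*t1*c - 24*t0*c - 4*n*t1 - 6*n^2*t1 - 4*n^3*t1 + 16*n^4 - n^4*t1 - n^4*t0 = 0"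
  obtains q where "continuous_on UNIV q"
    and "\<And>y. G y^2 - (t0 + t1 * Z y) * G y + (d0 + d1 * Z y + d2 * Z y^2) = y^5 * q y"
proof -
  define Q where "Q y =
      144*d2 - 576*t1*c + 1152*n*c - 24*n*t1 - 48*n^2*t1 - 48*n^3*t1 - 24*n^4*t1 + 144*n^5
    + y * (40*d2 - 288*t1*c + 576*n^2*c - 12*n^2*t1 - 16*n^3*t1 - 12*n^4*t1 + 40*n^6)
    + y^2 * (8*d2 - 96*t1*c + 192*n^3*c - 4*n^3*t1 - 4*n^4*t1 + 8*n^7)
    + y^3 * (576*c^2 + d2 - 24*t1*c + 48*n^4*c - n^4*t1 + n^8)" for y
  have taylor: "24 * (\<Sum>k<5. x^k / fact k) = 24 + 24*x + 12*x^2 + 4*x^3 + x^4" for x :: complex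
    by (simp add: eval_nat_numeral fact_numeral distrib_left)
  have "continuous_on UNIV (\<lambda>y. Q y / 576)"
    unfolding Q_def by (auto intro!: continuous_intros)
  moreover have "G y^2 - (t0 + t1 * Z y) * G y + (d0 + d1 * Z y + d2 * Z y^2) = y^5 * (Q y / 576)" for y
  proof -
    have hZ: "24 * Z y = 24 + 24*y + 12*y^2 + 4*y^3 + y^4"
      unfolding Z_def by (rule taylor)
    have hG: "24 * G y = 24 + 24*(n*y) + 12*(n*y)^2 + 4*(n*y)^3 + (n*y)^4 + 24*c*y^4"
      unfolding G_def distrib_left taylor by simp
    have "576 * (G y^2 - (t0 + t1 * Z y) * G y + (d0 + d1 * Z y + d2 * Z y^2))
        = (24 * G y)^2 - (24*t0 + t1 * (24 * Z y)) * (24 * G y) + 576*d0 + 24*d1 * (24 * Z y) + d2 * (24 * Z y)^2"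
      by algebra
    also have "\<dots> = 576 * (1 + d0 + d1 + d2 - t0 - t1)
        + 576 * (2*d2 + d1 - t1 + 2*n - n*t1 - n*t0) * y
        + 288 * (4*d2 + d1 - t1 - 2*n*t1 + 4*n^2 - n^2*t1 - n^2*t0) * y^2
        + 96 * (8*d2 + d1 - t1 - 3*n*t1 - 3*n^2*t1 + 8*n^3 - n^3*t1 - n^3*t0) * y^3
        + 24 * (48*c + 16*d2 + d1 - t1 - 24*t1*c - 24*t0*c - 4*n*t1 - 6*n^2*t1 - 4*n^3*t1 + 16*n^4 - n^4*t1 - n^4*t0) * y^4
        + y^5 * Q y"
      unfolding hZ hG Q_def by algebra
    finally show ?thesis
      unfolding low_coeffs by (simp add: field_simps)
  qed
  ultimately show ?thesis
    by (rule that)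
qed

lemma AF_char_poly_at_taylor_polys:
  fixes \<nu> R S T U :: real
  assumes "R + S \<noteq> 0"
    and T: "T = - (1/3) * (\<nu> + 1) * R + R^2 / (R + S) + 1/2"
    and U: "U = (1/6) * (2 * S * (\<nu> - 3 * R / (R + S) + 1) + 3)"
  defines "c \<equiv> (1/72) * (\<nu> - 1) * \<nu> * ((\<nu> - 2) * (\<nu> + 1) + 18 / (R + S))"
  obtains q where "continuous_on UNIV q"
    and "\<And>y :: complex. char_poly (AF_symbol \<nu> R S T U (\<Sum>k<5. y^k / fact k))
                ((\<Sum>k<5. (\<nu> * y)^k / fact k) + c * y^4) = y^5 * q y"
proof -
  define n W where "n = complex_of_real \<nu>" and "W = complex_of_real (1 / (R + S))"
  have W: "(of_real R + of_real S) * W = 1"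
    using assms(1) unfolding W_def by (simp flip: of_real_add of_real_mult)
  have "6 * T = 3 - 2 * (\<nu> + 1) * R + 6 * R^2 * (1 / (R + S))"
    and "6 * U = 3 + 2 * S * (\<nu> + 1 - 3 * R * (1 / (R + S)))"
    and "72 * c = (\<nu> - 1) * \<nu> * ((\<nu> - 2) * (\<nu> + 1) + 18 * (1 / (R + S)))"
    using assms(1) unfolding T U c_def by (simp_all add: field_simps)
  from this[THEN arg_cong[where f = complex_of_real]]
  have T': "6 * of_real T = 3 - 2 * (n + 1) * of_real R + 6 * of_real R^2 * W"
    and U': "6 * of_real U = 3 + 2 * of_real S * (n + 1 - 3 * of_real R * W)"
    and c': "72 * of_real c = (n - 1) * n * ((n - 2) * (n + 1) + 18 * W)"
    unfolding n_def W_def by simp_all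
  define p s r w where "p = n * (1 + (1 - n) * (of_real U - of_real T))"
    and "s = n * (1 - (1 - n) * of_real S)" and "r = (1 - n) * (1 - n * of_real R)"
    and "w = n * (1 - n) * (of_real R + of_real S)"
  define t0 t1 d0 d1 d2 where "t0 = 1 - p + r" and "t1 = p + s"
    and "d0 = (1 - p) * r + n * (1 - n) * of_real T * w"
    and "d1 = (1 - p) * s + p * r - n * (1 - n) * (of_real U + of_real T) * w"
    and "d2 = p * s + n * (1 - n) * of_real U * w"
  have char: "char_poly (AF_symbol \<nu> R S T U z) k = k^2 - (t0 + t1 * z) * k + (d0 + d1 * z + d2 * z^2)" for z k
    unfolding char_poly_2x2 det_2 trace_def sum_2 AF_symbol_nth
    unfolding t0_def t1_def d0_def d1_def d2_def p_def s_def r_def w_def n_def by algebra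
  have "1 + d0 + d1 + d2 - t0 - t1 = 0"
    and "2*d2 + d1 - t1 + 2*n - n*t1 - n*t0 = 0"
    and "4*d2 + d1 - t1 - 2*n*t1 + 4*n^2 - n^2*t1 - n^2*t0 = 0"
    and "8*d2 + d1 - t1 - 3*n*t1 - 3*n^2*t1 + 8*n^3 - n^3*t1 - n^3*t0 = 0"
    and "48 * of_real c + 16*d2 + d1 - t1 - 24*t1 * of_real c - 24*t0 * of_real c - 4*n*t1 - 6*n^2*t1
      - 4*n^3*t1 + 16*n^4 - n^4*t1 - n^4*t0 = 0"
    using W T' U' c' unfolding t0_def t1_def d0_def d1_def d2_def p_def s_def r_def w_def
    by algebra+
  then show ?thesis
    by (rule monic_quadratic_at_exp_taylor) (rule that, assumption, simp only: char n_def)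
qed

lemma AF_char_poly_residual_bigo:
  fixes \<nu> R S T U :: real
  assumes "R + S \<noteq> 0"
    and "T = - (1/3) * (\<nu> + 1) * R + R^2 / (R + S) + 1/2"
    and "U = (1/6) * (2 * S * (\<nu> - 3 * R / (R + S) + 1) + 3)"
  defines "c \<equiv> (1/72) * (\<nu> - 1) * \<nu> * ((\<nu> - 2) * (\<nu> + 1) + 18 / (R + S))"
  shows "(\<lambda>\<theta>::real. char_poly (AF_matrix \<nu> R S T U \<theta>) (exp (- \<i> * \<nu> * \<theta>) + of_real (c * \<theta>^4)))
           \<in> O[at 0](\<lambda>\<theta>. (of_real \<theta> :: complex)^5)"
proof -
  obtain q where q: "continuous_on UNIV q"
    and q_eq: "\<And>y :: complex. char_poly (AF_symbol \<nu> R S T U (\<Sum>k<5. y^k / fact k))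
                ((\<Sum>k<5. (\<nu> * y)^k / fact k) + c * y^4) = y^5 * q y"
    using AF_char_poly_at_taylor_polys[OF assms(1-3)] unfolding c_def by blast
  define y where "y \<theta> = - \<i> * complex_of_real \<theta>" for \<theta>
  define Z G where "Z \<theta> = (\<Sum>k<5. y \<theta>^k / fact k)"
    and "G \<theta> = (\<Sum>k<5. (\<nu> * y \<theta>)^k / fact k) + c * y \<theta>^4" for \<theta>
  define \<mu> where "\<mu> \<theta> = exp (\<nu> * y \<theta>) + c * y \<theta>^4" for \<theta>
  have y: "(y \<longlongrightarrow> 0) (at 0)" "((\<lambda>\<theta>. \<nu> * y \<theta>) \<longlongrightarrow> 0) (at 0)"
    unfolding y_def by (auto intro!: tendsto_eq_intros)
  have y_bigo: "(\<lambda>\<theta>. y \<theta>^5) \<in> O[at 0](\<lambda>\<theta>. (of_real \<theta> :: complex)^5)"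
    "(\<lambda>\<theta>. (\<nu> * y \<theta>)^5) \<in> O[at 0](\<lambda>\<theta>. (of_real \<theta> :: complex)^5)"
    by (rule bigoI[where c = 1], simp add: y_def norm_mult norm_power)
      (rule bigoI[where c = "\<bar>\<nu>\<bar> ^ 5"], simp add: y_def norm_mult norm_power power_mult_distrib)
  have exp_Z: "(\<lambda>\<theta>. exp (y \<theta>) - Z \<theta>) \<in> O[at 0](\<lambda>\<theta>. (of_real \<theta> :: complex)^5)"
    using landau_o.big_trans[OF exp_taylor_remainder_bigo[OF y(1)] y_bigo(1)] by (simp add: Z_def)
  have \<mu>_G: "(\<lambda>\<theta>. \<mu> \<theta> - G \<theta>) \<in> O[at 0](\<lambda>\<theta>. (of_real \<theta> :: complex)^5)"
    using landau_o.big_trans[OF exp_taylor_remainder_bigo[OF y(2)] y_bigo(2)] by (simp add: \<mu>_def G_def)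
  have lims: "((\<lambda>\<theta>. exp (y \<theta>)) \<longlongrightarrow> 1) (at 0)" "(Z \<longlongrightarrow> 1) (at 0)" "(\<mu> \<longlongrightarrow> 1) (at 0)" "(G \<longlongrightarrow> 1) (at 0)"
    unfolding Z_def G_def \<mu>_def using y by (auto intro!: tendsto_eq_intros simp: eval_nat_numeral)
  have "(\<lambda>\<theta>. char_poly (AF_symbol \<nu> R S T U (exp (y \<theta>))) (\<mu> \<theta>) - char_poly (AF_symbol \<nu> R S T U (Z \<theta>)) (G \<theta>))
      \<in> O[at 0](\<lambda>\<theta>. (of_real \<theta> :: complex)^5)"
    by (rule AF_char_poly_bigo_perturbation[OF exp_Z \<mu>_G lims])
  moreover have "(\<lambda>\<theta>. char_poly (AF_symbol \<nu> R S T U (Z \<theta>)) (G \<theta>)) \<in> O[at 0](\<lambda>\<theta>. (of_real \<theta> :: complex)^5)"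
  proof -
    have "((\<lambda>\<theta>. q (y \<theta>)) \<longlongrightarrow> q 0) (at 0)"
      using q y(1) by (auto intro: continuous_on_tendsto_compose)
    then show ?thesis
      unfolding Z_def G_def q_eq using landau_o.big_1_mult[OF y_bigo(1) tendsto_imp_bigo_1] by simp
  qed
  ultimately have "(\<lambda>\<theta>. char_poly (AF_symbol \<nu> R S T U (exp (y \<theta>))) (\<mu> \<theta>)) \<in> O[at 0](\<lambda>\<theta>. (of_real \<theta> :: complex)^5)"
    using sum_in_bigo(1) by fastforce
  moreover have "AF_matrix \<nu> R S T U \<theta> = AF_symbol \<nu> R S T U (exp (y \<theta>))"
    and "exp (- \<i> * \<nu> * \<theta>) + of_real (c * \<theta>^4) = \<mu> \<theta>" for \<theta> :: real
    by (simp_all add: AF_matrix_eq_symbol y_def \<mu>_def power_mult_distrib algebra_simps)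
  ultimately show ?thesis
    by simp
qed

theorem mainTheorem1:
  fixes \<nu> R S T U r :: real and lam :: "complex \<Rightarrow> complex"
  assumes "0 < \<nu>" "\<nu> < 1" "R > 0" "S > 0" "T > 0" "U > 0"
    and "T = - (1/3) * (\<nu> + 1) * R + R^2 / (R + S) + 1/2"
    and "U = (1/6) * (2 * S * (\<nu> - 3 * R / (R + S) + 1) + 3)"
    and "r > 0" and "lam holomorphic_on ball 0 r"
    and "\<forall>\<theta>::real. \<bar>\<theta>\<bar> < r \<longrightarrow> is_eigenvalue (AF_matrix \<nu> R S T U (of_real \<theta>)) (lam (of_real \<theta>))"
    and "lam 0 = 1"
  shows "(\<lambda>\<theta>::real. lam (of_real \<theta>) - exp (- \<i> * of_real \<nu> * of_real \<theta>)
            - of_real ((1/72) * (\<nu> - 1) * \<nu> * ((\<nu> - 2) * (\<nu> + 1) + 18 / (R + S)) * \<theta>^4))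
         \<in> O[at 0](\<lambda>\<theta>::real. (of_real \<theta> :: complex)^5)"
proof -
  define A where "A \<theta> = AF_matrix \<nu> R S T U (complex_of_real \<theta>)" for \<theta> :: real
  define \<mu> where "\<mu> \<theta> = exp (- \<i> * \<nu> * \<theta>)
      + of_real ((1/72) * (\<nu> - 1) * \<nu> * ((\<nu> - 2) * (\<nu> + 1) + 18 / (R + S)) * \<theta>^4)" for \<theta> :: real
  have "\<forall>\<^sub>F \<theta> in at 0. \<bar>\<theta>\<bar> < r"
    using \<open>r > 0\<close> by (auto simp: eventually_at dist_real_def)
  then have root: "\<forall>\<^sub>F \<theta> in at 0. char_poly (A \<theta>) (lam \<theta>) = 0"
    by eventually_elim (use assms(11) in \<open>auto simp: A_def is_eigenvalue_def intro: char_poly_eq_0_if_eigenvector\<close>)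
  have "isCont lam 0"
    using continuous_on_interior[OF holomorphic_on_imp_continuous_on[OF assms(10)]] assms(9) by simp
  moreover have "((\<lambda>\<theta>::real. complex_of_real \<theta>) \<longlongrightarrow> 0) (at 0)"
    by (auto intro!: tendsto_eq_intros)
  ultimately have "((\<lambda>\<theta>::real. lam \<theta>) \<longlongrightarrow> 1) (at 0)"
    using isCont_tendsto_compose assms(12) by fastforce
  moreover have "(\<mu> \<longlongrightarrow> 1) (at 0)"
    unfolding \<mu>_def by (auto intro!: tendsto_eq_intros)
  ultimately have lim: "((\<lambda>\<theta>. lam \<theta> + \<mu> \<theta> - trace (A \<theta>)) \<longlongrightarrow> of_real (\<nu> * (1 - \<nu>) * (R + S))) (at 0)"
    using tendsto_diff[OF tendsto_add tendsto_AF_matrix_trace] unfolding A_def by fastforce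
  have "complex_of_real (\<nu> * (1 - \<nu>) * (R + S)) \<noteq> 0"
    unfolding of_real_eq_0_iff using assms(1-4) by simp
  moreover have "(\<lambda>\<theta>. char_poly (A \<theta>) (\<mu> \<theta>)) \<in> O[at 0](\<lambda>\<theta>. (of_real \<theta> :: complex)^5)"
    using AF_char_poly_residual_bigo[OF _ assms(7,8)] assms(3,4) unfolding A_def \<mu>_def by simp
  ultimately have "(\<lambda>\<theta>. lam \<theta> - \<mu> \<theta>) \<in> O[at 0](\<lambda>\<theta>. (of_real \<theta> :: complex)^5)"
    using char_poly_2x2_root_perturbation[OF root lim] by simp
  then show ?thesis
    by (simp add: \<mu>_def diff_diff_eq)
qed

end
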